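(* Consider the ride-hailing model in the context and a demand vector $\bm b^C$ with $0\le b^C_i\le b_i$. The program $\mathcal{CV}(\bm b^C)$ may have multiple optimal solutions (multiple CV equilibria), but all optimal solutions $\bm x^C$: 1. yield the same platform profit $\pi(\bm b^C)=\sum_{i,\alpha}r^{C2P}_{i\alpha}x^C_{i\alpha}$; 2. have the same active mass $m^C_0=\sum_{i,\alpha}\tau^{dr}_{i\alpha}x^C_{i\alpha}$; 3. moreover $\pi(\bm b^C)$, as a function of the CV fleet mass $N$ (with $\bm b^C$ and all other parameters fixed), is non-decreasing in $N$; 4. every optimal solution $\bm x^C$ of $\mathcal{CV}(\bm b^C)$ is also an optimal solution of the problem: maximize $\sum_{i,\alpha}r^C_{i\alpha}x_{i\alpha}$ over $\bm x\ge0$ satisfying $\sum_j x_{ji}\le b^C_i$ for all $i$, flow balance, and $\sum_{i,\alpha}\tau^{dr}_{i\alpha}x_{i\alpha}\le m^C_0$.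
   Context: Model. There are $L$ regions $\{1,\dots,L\}$. For regions $i,j$, $b_{ij}\ge0$ is the customer rate from $i$ to $j$; $b_i=\sum_j b_{ij}$ (assumed $>0$), $q_{ij}=b_{ij}/b_i$. Travel times satisfy $t_{ij}>0$ for $i\ne j$, $t_{ii}=0$. Constants: $p>0$, $c\ge0$, $R\in(0,1)$, CV fleet mass $N>0$. For $i,\alpha$: $\tau^{dr}_{i\alpha}=t_{i\alpha}+\sum_j q_{\alpha j}t_{\alpha j}$, $r^C_{i\alpha}=p(1-R)\sum_j q_{\alpha j}t_{\alpha j}-c\tau^{dr}_{i\alpha}$, $r^{C2P}_{i\alpha}=pR\sum_j q_{\alpha j}t_{\alpha j}$. A matrix $\bm x\in\mathbb R^{L\times L}_{\ge0}$ satisfies flow balance if $\sum_j(\sum_k x_{kj})q_{ji}=\sum_\alpha x_{i\alpha}$ for all $i$. $\mathcal{CV}(\bm b^C)$: maximize $N\log\sum_{i,\alpha}r^C_{i\alpha}x_{i\alpha}-\sum_{i,\alpha}\tau^{dr}_{i\alpha}x_{i\alpha}$ over $\bm x\ge0$ satisfying flow balance and $\sum_j x_{ji}\le b^C_i$ for all $i$. *)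

theory Defs
  imports Complex_Main
begin

text \<open>Regions are the elements of a finite type 'r (so L = CARD('r) \<ge> 1).
  Matrices indexed by regions are functions 'r \<Rightarrow> 'r \<Rightarrow> real.\<close>

definition bsum :: "('r::finite \<Rightarrow> 'r \<Rightarrow> real) \<Rightarrow> 'r \<Rightarrow> real" where
  "bsum b i = (\<Sum>j\<in>UNIV. b i j)"

definition qm :: "('r::finite \<Rightarrow> 'r \<Rightarrow> real) \<Rightarrow> 'r \<Rightarrow> 'r \<Rightarrow> real" where
  "qm b i j = b i j / bsum b i"

definition avg_trip :: "('r::finite \<Rightarrow> 'r \<Rightarrow> real) \<Rightarrow> ('r \<Rightarrow> 'r \<Rightarrow> real) \<Rightarrow> 'r \<Rightarrow> real" where
  "avg_trip b t a = (\<Sum>j\<in>UNIV. qm b a j * t a j)"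

definition tau_dr :: "('r::finite \<Rightarrow> 'r \<Rightarrow> real) \<Rightarrow> ('r \<Rightarrow> 'r \<Rightarrow> real) \<Rightarrow> 'r \<Rightarrow> 'r \<Rightarrow> real" where
  "tau_dr b t i a = t i a + avg_trip b t a"

definition rC :: "real \<Rightarrow> real \<Rightarrow> real \<Rightarrow> ('r::finite \<Rightarrow> 'r \<Rightarrow> real) \<Rightarrow> ('r \<Rightarrow> 'r \<Rightarrow> real) \<Rightarrow> 'r \<Rightarrow> 'r \<Rightarrow> real" where
  "rC p R c b t i a = p * (1 - R) * avg_trip b t a - c * tau_dr b t i a"

definition rC2P :: "real \<Rightarrow> real \<Rightarrow> ('r::finite \<Rightarrow> 'r \<Rightarrow> real) \<Rightarrow> ('r \<Rightarrow> 'r \<Rightarrow> real) \<Rightarrow> 'r \<Rightarrow> 'r \<Rightarrow> real" where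
  "rC2P p R b t i a = p * R * avg_trip b t a"

definition flow_balance :: "('r::finite \<Rightarrow> 'r \<Rightarrow> real) \<Rightarrow> ('r \<Rightarrow> 'r \<Rightarrow> real) \<Rightarrow> bool" where
  "flow_balance b x \<longleftrightarrow>
     (\<forall>i. (\<Sum>j\<in>UNIV. (\<Sum>k\<in>UNIV. x k j) * qm b j i) = (\<Sum>a\<in>UNIV. x i a))"

definition cv_feasible :: "('r::finite \<Rightarrow> 'r \<Rightarrow> real) \<Rightarrow> ('r \<Rightarrow> real) \<Rightarrow> ('r \<Rightarrow> 'r \<Rightarrow> real) \<Rightarrow> bool" where
  "cv_feasible b bC x \<longleftrightarrow>
     (\<forall>i a. 0 \<le> x i a) \<and> flow_balance b x \<and> (\<forall>i. (\<Sum>j\<in>UNIV. x j i) \<le> bC i)"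

definition lin_val :: "('r::finite \<Rightarrow> 'r \<Rightarrow> real) \<Rightarrow> ('r \<Rightarrow> 'r \<Rightarrow> real) \<Rightarrow> real" where
  "lin_val w x = (\<Sum>i\<in>UNIV. \<Sum>a\<in>UNIV. w i a * x i a)"

definition cv_obj :: "real \<Rightarrow> real \<Rightarrow> real \<Rightarrow> real \<Rightarrow> ('r::finite \<Rightarrow> 'r \<Rightarrow> real) \<Rightarrow> ('r \<Rightarrow> 'r \<Rightarrow> real)
    \<Rightarrow> ('r \<Rightarrow> 'r \<Rightarrow> real) \<Rightarrow> real" where
  "cv_obj N p R c b t x = N * ln (lin_val (rC p R c b t) x) - lin_val (tau_dr b t) x"

text \<open>Optimal solution of CV(b^C): feasible, in the domain of the logarithm
  (positive CV revenue, i.e. finite objective value), and maximizing the objective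
  among all such points.\<close>
definition cv_optimal :: "real \<Rightarrow> real \<Rightarrow> real \<Rightarrow> real \<Rightarrow> ('r::finite \<Rightarrow> 'r \<Rightarrow> real) \<Rightarrow> ('r \<Rightarrow> 'r \<Rightarrow> real)
    \<Rightarrow> ('r \<Rightarrow> real) \<Rightarrow> ('r \<Rightarrow> 'r \<Rightarrow> real) \<Rightarrow> bool" where
  "cv_optimal N p R c b t bC x \<longleftrightarrow>
     cv_feasible b bC x \<and> 0 < lin_val (rC p R c b t) x \<and>
     (\<forall>y. cv_feasible b bC y \<and> 0 < lin_val (rC p R c b t) y \<longrightarrow>
          cv_obj N p R c b t y \<le> cv_obj N p R c b t x)"

definition lp_optimal :: "real \<Rightarrow> real \<Rightarrow> real \<Rightarrow> ('r::finite \<Rightarrow> 'r \<Rightarrow> real) \<Rightarrow> ('r \<Rightarrow> 'r \<Rightarrow> real)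
    \<Rightarrow> ('r \<Rightarrow> real) \<Rightarrow> real \<Rightarrow> ('r \<Rightarrow> 'r \<Rightarrow> real) \<Rightarrow> bool" where
  "lp_optimal p R c b t bC m0 x \<longleftrightarrow>
     cv_feasible b bC x \<and> lin_val (tau_dr b t) x \<le> m0 \<and>
     (\<forall>y. cv_feasible b bC y \<and> lin_val (tau_dr b t) y \<le> m0 \<longrightarrow>
          lin_val (rC p R c b t) y \<le> lin_val (rC p R c b t) x)"

end

theory Submission
  imports Defs
begin

text \<open>The CV objective depends on a feasible point x only through its revenue
  r(x) = \<Sum> r^C x and its active mass m(x) = \<Sum> \<tau>^dr x, both linear in x, and the
  platform profit is the linear combination R/(1-R) (r(x) + c m(x)). The feasible set
  is convex and N ln r - m is strictly concave in r, so the midpoint of two optimal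
  solutions would be strictly better unless they share r, and then m as well. Comparing
  the optimality of x1 for N1 and of x2 for N2 yields (N2 - N1)(ln r(x2) - ln r(x1)) \<ge> 0,
  hence r and m are both non-decreasing in N. Finally, a point with no more mass and
  strictly more revenue than an optimal solution would have a strictly larger objective.\<close>

lemma lin_val_comb:
  "lin_val w (\<lambda>i a. u * x i a + v * y i a) = u * lin_val w x + v * lin_val w y"
  unfolding lin_val_def by (simp add: algebra_simps sum.distrib sum_distrib_left)

lemma flow_balance_comb:
  assumes "flow_balance b x" "flow_balance b y"
  shows "flow_balance b (\<lambda>i a. u * x i a + v * y i a)"
  unfolding flow_balance_def
proof
  fix i
  have "(\<Sum>j\<in>UNIV. (\<Sum>k\<in>UNIV. u * x k j + v * y k j) * qm b j i)
      = u * (\<Sum>j\<in>UNIV. (\<Sum>k\<in>UNIV. x k j) * qm b j i)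
        + v * (\<Sum>j\<in>UNIV. (\<Sum>k\<in>UNIV. y k j) * qm b j i)"
    by (simp add: algebra_simps sum.distrib sum_distrib_left sum_distrib_right)
  also have "\<dots> = u * (\<Sum>a\<in>UNIV. x i a) + v * (\<Sum>a\<in>UNIV. y i a)"
    using assms unfolding flow_balance_def by simp
  also have "\<dots> = (\<Sum>a\<in>UNIV. u * x i a + v * y i a)"
    by (simp add: sum.distrib sum_distrib_left)
  finally show "(\<Sum>j\<in>UNIV. (\<Sum>k\<in>UNIV. u * x k j + v * y k j) * qm b j i)
      = (\<Sum>a\<in>UNIV. u * x i a + v * y i a)" .
qed

lemma cv_feasible_convex:
  assumes x: "cv_feasible b bC x" and y: "cv_feasible b bC y"
    and u: "0 \<le> u" "u \<le> 1"
  shows "cv_feasible b bC (\<lambda>i a. u * x i a + (1 - u) * y i a)"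
  unfolding cv_feasible_def
proof (intro conjI allI)
  show "flow_balance b (\<lambda>i a. u * x i a + (1 - u) * y i a)"
    using x y by (intro flow_balance_comb) (auto simp: cv_feasible_def)
next
  fix i a
  show "0 \<le> u * x i a + (1 - u) * y i a"
    using x y u by (simp add: cv_feasible_def)
next
  fix i
  have "(\<Sum>j\<in>UNIV. u * x j i + (1 - u) * y j i)
      = u * (\<Sum>j\<in>UNIV. x j i) + (1 - u) * (\<Sum>j\<in>UNIV. y j i)"
    by (simp add: sum.distrib sum_distrib_left)
  also have "\<dots> \<le> u * bC i + (1 - u) * bC i"
    using x y u unfolding cv_feasible_def by (intro add_mono mult_left_mono) auto
  finally show "(\<Sum>j\<in>UNIV. u * x j i + (1 - u) * y j i) \<le> bC i"
    by (simp add: algebra_simps)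
qed

lemma ln_add_less_twice_ln_midpoint:
  fixes a b :: real
  assumes "0 < a" "0 < b" "a \<noteq> b"
  shows "ln a + ln b < 2 * ln ((a + b) / 2)"
proof -
  have "0 < (a - b) ^ 2"
    using assms by simp
  then have "a * b < ((a + b) / 2) ^ 2"
    by (simp add: power2_eq_square algebra_simps)
  then have "ln (a * b) < ln (((a + b) / 2) ^ 2)"
    using assms by simp
  then show ?thesis
    using assms by (simp add: ln_mult ln_realpow)
qed

lemma lin_val_rC2P:
  assumes "R < 1"
  shows "lin_val (rC2P p R b t) x
       = R / (1 - R) * (lin_val (rC p R c b t) x + c * lin_val (tau_dr b t) x)"
proof -
  have "rC2P p R b t i a = R / (1 - R) * (rC p R c b t i a + c * tau_dr b t i a)" for i a
    using assms unfolding rC2P_def rC_def by (simp add: field_simps)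
  then show ?thesis
    unfolding lin_val_def by (simp add: algebra_simps sum.distrib sum_distrib_left)
qed

lemma cv_optimalD:
  assumes "cv_optimal N p R c b t bC x"
  shows "cv_feasible b bC x" "0 < lin_val (rC p R c b t) x"
    and "cv_feasible b bC y \<Longrightarrow> 0 < lin_val (rC p R c b t) y
         \<Longrightarrow> N * ln (lin_val (rC p R c b t) y) - lin_val (tau_dr b t) y
           \<le> N * ln (lin_val (rC p R c b t) x) - lin_val (tau_dr b t) x"
  using assms unfolding cv_optimal_def cv_obj_def by auto

lemma cv_optimal_same_revenue_and_mass:
  assumes N: "0 < N"
    and ox: "cv_optimal N p R c b t bC x" and oy: "cv_optimal N p R c b t bC y"
  shows "lin_val (rC p R c b t) x = lin_val (rC p R c b t) y"
    and "lin_val (tau_dr b t) x = lin_val (tau_dr b t) y"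
proof -
  let ?r = "lin_val (rC p R c b t)" and ?m = "lin_val (tau_dr b t)"
  define z where "z = (\<lambda>i a. (1/2) * x i a + (1 - 1/2) * y i a)"
  have rx: "0 < ?r x" and ry: "0 < ?r y"
    using cv_optimalD(2)[OF ox] cv_optimalD(2)[OF oy] .
  have rz: "?r z = (?r x + ?r y) / 2" and mz: "?m z = (?m x + ?m y) / 2"
    unfolding z_def lin_val_comb by simp_all
  have fz: "cv_feasible b bC z"
    unfolding z_def by (rule cv_feasible_convex[OF cv_optimalD(1)[OF ox] cv_optimalD(1)[OF oy]]) simp_all
  have xy: "N * ln (?r y) - ?m y \<le> N * ln (?r x) - ?m x"
    by (rule cv_optimalD(3)[OF ox cv_optimalD(1,2)[OF oy]])
  have yx: "N * ln (?r x) - ?m x \<le> N * ln (?r y) - ?m y"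
    by (rule cv_optimalD(3)[OF oy cv_optimalD(1,2)[OF ox]])
  have "0 < ?r z"
    using rx ry rz by simp
  then have zx: "N * ln (?r z) - ?m z \<le> N * ln (?r x) - ?m x"
    using cv_optimalD(3)[OF ox fz] by blast
  show req: "?r x = ?r y"
  proof (rule ccontr)
    assume "?r x \<noteq> ?r y"
    then have "ln (?r x) + ln (?r y) < 2 * ln (?r z)"
      unfolding rz by (rule ln_add_less_twice_ln_midpoint[OF rx ry])
    then have "N * ((ln (?r x) + ln (?r y)) / 2) < N * ln (?r z)"
      using N by simp
    then show False
      using xy yx zx mz by argo
  qed
  show "?m x = ?m y"
    using xy yx req by simp
qed

lemma ln_objective_exchange_mono:
  fixes N1 N2 r1 r2 m1 m2 :: real
  assumes "0 \<le> N1" "N1 < N2" "0 < r1" "0 < r2"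
    and opt1: "N1 * ln r2 - m2 \<le> N1 * ln r1 - m1"
    and opt2: "N2 * ln r1 - m1 \<le> N2 * ln r2 - m2"
  shows "r1 \<le> r2" and "m1 \<le> m2"
proof -
  have "0 \<le> (N2 - N1) * (ln r2 - ln r1)"
    using opt1 opt2 by (simp add: algebra_simps)
  then have ln_le: "ln r1 \<le> ln r2"
    using assms(2) by (simp add: zero_le_mult_iff)
  then show "r1 \<le> r2"
    using assms(3,4) by simp
  have "0 \<le> N1 * (ln r2 - ln r1)"
    using assms(1) ln_le by simp
  then show "m1 \<le> m2"
    using opt1 by (simp add: algebra_simps)
qed

lemma cv_optimal_mono_fleet_mass:
  assumes "0 < N1" "N1 \<le> N2"
    and o1: "cv_optimal N1 p R c b t bC x1" and o2: "cv_optimal N2 p R c b t bC x2"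
  shows "lin_val (rC p R c b t) x1 \<le> lin_val (rC p R c b t) x2
       \<and> lin_val (tau_dr b t) x1 \<le> lin_val (tau_dr b t) x2"
proof (cases "N1 = N2")
  case True
  then show ?thesis
    using assms cv_optimal_same_revenue_and_mass[of N1 p R c b t bC x1 x2] by simp
next
  case False
  then have "N1 < N2"
    using assms(2) by simp
  moreover note ln_objective_exchange_mono[OF _ this cv_optimalD(2)[OF o1] cv_optimalD(2)[OF o2]
      cv_optimalD(3)[OF o1 cv_optimalD(1,2)[OF o2]] cv_optimalD(3)[OF o2 cv_optimalD(1,2)[OF o1]]]
  ultimately show ?thesis
    using assms(1) by simp
qed

lemma cv_optimal_imp_lp_optimal:
  assumes N: "0 < N" and ox: "cv_optimal N p R c b t bC x"
  shows "lp_optimal p R c b t bC (lin_val (tau_dr b t) x) x"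
  unfolding lp_optimal_def
proof (intro conjI allI impI order_refl cv_optimalD(1)[OF ox])
  let ?r = "lin_val (rC p R c b t)" and ?m = "lin_val (tau_dr b t)"
  fix y assume y: "cv_feasible b bC y \<and> ?m y \<le> ?m x"
  show "?r y \<le> ?r x"
  proof (rule ccontr)
    assume "\<not> ?r y \<le> ?r x"
    then have "?r x < ?r y" by simp
    moreover have "0 < ?r x"
      using cv_optimalD(2)[OF ox] .
    ultimately have "N * ln (?r x) < N * ln (?r y)" and "0 < ?r y"
      using N by simp_all
    moreover have "N * ln (?r y) - ?m y \<le> N * ln (?r x) - ?m x"
      using cv_optimalD(3)[OF ox] y \<open>0 < ?r y\<close> by blast
    ultimately show False
      using y by linarith
  qed
qed

theorem proposition2:
  fixes b t :: "'r::finite \<Rightarrow> 'r \<Rightarrow> real"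
    and bC :: "'r \<Rightarrow> real"
    and p c R N :: real
  assumes b_nonneg: "\<forall>i j. 0 \<le> b i j"
    and b_pos: "\<forall>i. 0 < bsum b i"
    and t_pos: "\<forall>i j. i \<noteq> j \<longrightarrow> 0 < t i j"
    and t_diag: "\<forall>i. t i i = 0"
    and p_pos: "0 < p" and c_nonneg: "0 \<le> c"
    and R_pos: "0 < R" and R_lt1: "R < 1"
    and N_pos: "0 < N"
    and bC_bounds: "\<forall>i. 0 \<le> bC i \<and> bC i \<le> bsum b i"
  shows
    "(\<forall>x y. cv_optimal N p R c b t bC x \<and> cv_optimal N p R c b t bC y \<longrightarrow>
        lin_val (rC2P p R b t) x = lin_val (rC2P p R b t) y)
   \<and> (\<forall>x y. cv_optimal N p R c b t bC x \<and> cv_optimal N p R c b t bC y \<longrightarrow>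
        lin_val (tau_dr b t) x = lin_val (tau_dr b t) y)
   \<and> (\<forall>N1 N2 x1 x2. 0 < N1 \<and> N1 \<le> N2 \<and>
        cv_optimal N1 p R c b t bC x1 \<and> cv_optimal N2 p R c b t bC x2 \<longrightarrow>
        lin_val (rC2P p R b t) x1 \<le> lin_val (rC2P p R b t) x2)
   \<and> (\<forall>x. cv_optimal N p R c b t bC x \<longrightarrow>
        lp_optimal p R c b t bC (lin_val (tau_dr b t) x) x)"
proof (intro conjI allI impI)
  fix x y assume "cv_optimal N p R c b t bC x \<and> cv_optimal N p R c b t bC y"
  then have "lin_val (rC p R c b t) x = lin_val (rC p R c b t) y"
    and mass: "lin_val (tau_dr b t) x = lin_val (tau_dr b t) y"
    using cv_optimal_same_revenue_and_mass[OF N_pos] by blast+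
  then show "lin_val (rC2P p R b t) x = lin_val (rC2P p R b t) y"
    unfolding lin_val_rC2P[OF R_lt1, where c=c] by simp
  show "lin_val (tau_dr b t) x = lin_val (tau_dr b t) y"
    using mass .
next
  fix N1 N2 x1 x2
  assume "0 < N1 \<and> N1 \<le> N2 \<and> cv_optimal N1 p R c b t bC x1 \<and> cv_optimal N2 p R c b t bC x2"
  then have "lin_val (rC p R c b t) x1 + c * lin_val (tau_dr b t) x1
           \<le> lin_val (rC p R c b t) x2 + c * lin_val (tau_dr b t) x2"
    using cv_optimal_mono_fleet_mass c_nonneg by (meson add_mono mult_left_mono)
  moreover have "0 \<le> R / (1 - R)"
    using R_pos R_lt1 by simp
  ultimately show "lin_val (rC2P p R b t) x1 \<le> lin_val (rC2P p R b t) x2"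
    unfolding lin_val_rC2P[OF R_lt1, where c=c] by (rule mult_left_mono)
next
  fix x assume "cv_optimal N p R c b t bC x"
  then show "lp_optimal p R c b t bC (lin_val (tau_dr b t) x) x"
    by (rule cv_optimal_imp_lp_optimal[OF N_pos])
qed

end
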